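(* There is an absolute constant $c_0\in(0,1)$ such that the following holds. Let $A\in[0,1]^{m\times n}$ with $0<\Delta_1<c_0$, let $x\in\mathbb{R}_{\ge0}^n$, and let $\delta\in(0,1)$ with $\delta\ge2\sqrt{\Delta_1\ln(1/\Delta_1)}$ and $\alpha=\frac{1+\delta+\delta^2/2}{1-\delta}$. Let $i\in[m]$ and let $\theta_i\in(0,\Delta_1]$ satisfy $\sum_{j:A_{i,j}\le\theta_i}A_{i,j}x_j\ge1-\delta$. If $z$ is the randomized rounding of $\alpha x$, then $\Pr[(Az)_i<1]\le\theta_i$.
   Context: $\Delta_1=\max_{j\in[n]}\sum_{i=1}^mA_{i,j}$. Randomized rounding of $\alpha x$: $z\in\mathbb{Z}_{\ge0}^n$ is the random vector with independent coordinates $z_j=\lfloor\alpha x_j\rfloor+B_j$, where $B_j\in\{0,1\}$ is Bernoulli with $\Pr[B_j=1]=\alpha x_j-\lfloor\alpha x_j\rfloor$. *)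

theory Defs
  imports "HOL-Probability.Probability"
begin

text \<open>Matrices A in [0,1]^(m x n) are functions nat => nat => real, used on i < m, j < n.\<close>

definition Delta1 :: "nat \<Rightarrow> nat \<Rightarrow> (nat \<Rightarrow> nat \<Rightarrow> real) \<Rightarrow> real" where
  "Delta1 m n A = Max ((\<lambda>j. \<Sum>i<m. A i j) ` {..<n})"

definition rand_round :: "nat \<Rightarrow> (nat \<Rightarrow> real) \<Rightarrow> (nat \<Rightarrow> int) pmf" where
  "rand_round n y =
     map_pmf (\<lambda>B j. if j < n then \<lfloor>y j\<rfloor> + (if B j then 1 else 0) else 0)
       (Pi_pmf {..<n} False (\<lambda>j. bernoulli_pmf (y j - of_int \<lfloor>y j\<rfloor>)))"

end

theory Submission
  imports Defs
begin

text \<open>Chernoff's method for the lower tail: for \<open>L \<ge> 0\<close> the probability is at most \<open>exp L\<close>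
  times the expectation of \<open>exp (- L (A z)_i)\<close>, and independence of the rounded coordinates
  factors this moment, coordinate \<open>j\<close> contributing at most \<open>exp ((exp (- L A_ij) - 1) \<alpha> x_j)\<close>.
  With \<open>L = \<delta> / (2 \<theta>)\<close>, convexity of \<open>exp\<close> bounds \<open>exp (- L A_ij) - 1\<close> by
  \<open>(A_ij / \<theta>) (exp (- \<delta> / 2) - 1)\<close> on the entries \<open>A_ij \<le> \<theta>\<close>, which carry mass at least
  \<open>1 - \<delta>\<close>; the choice of \<open>\<alpha>\<close> then makes the exponent at most \<open>- \<delta>\<^sup>2 / (4 \<theta>)\<close>.
  Since \<open>t ln (1 / t)\<close> increases on \<open>(0, 1 / e]\<close>, \<open>\<theta> ln (1 / \<theta>) \<le> \<Delta>\<^sub>1 ln (1 / \<Delta>\<^sub>1) \<le> \<delta>\<^sup>2 / 4\<close>,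
  so the exponent is at most \<open>ln \<theta>\<close>.\<close>

lemma exp_neg_mult_le_convex_comb:
  fixes s t :: real
  assumes "0 \<le> t" "t \<le> 1"
  shows "exp (- s * t) \<le> 1 - t + t * exp (- s)"
  using convex_onD[OF exp_convex, of t 0 "- s"] assms by (simp add: algebra_simps)

lemma prob_less_one_le_exp_moment:
  fixes p :: "'a pmf" and f :: "'a \<Rightarrow> real"
  assumes "0 \<le> L" and "integrable (measure_pmf p) (\<lambda>w. exp (- L * f w))"
  shows "measure_pmf.prob p {w. f w < 1} \<le> exp L * measure_pmf.expectation p (\<lambda>w. exp (- L * f w))"
proof -
  have "measure_pmf.prob p {w. f w < 1} = measure_pmf.expectation p (indicator {w. f w < 1})"
    by simp
  also have "\<dots> \<le> measure_pmf.expectation p (\<lambda>w. exp L * exp (- L * f w))"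
  proof (rule integral_mono)
    fix w
    have "L * f w \<le> L" if "f w < 1"
      using mult_left_mono[of "f w" 1 L] that assms(1) by simp
    then show "indicator {w. f w < 1} w \<le> exp L * exp (- L * f w)"
      by (auto simp: indicator_def exp_add[symmetric])
  qed (use assms(2) in \<open>auto intro: measure_pmf.integrable_const_bound[where B = 1]\<close>)
  finally show ?thesis by simp
qed

lemma bernoulli_rounding_exp_moment_le:
  fixes c y :: real
  assumes "0 \<le> c" "0 \<le> y"
  shows "measure_pmf.expectation (bernoulli_pmf (y - of_int \<lfloor>y\<rfloor>))
           (\<lambda>b. exp (- c * (of_int \<lfloor>y\<rfloor> + (if b then 1 else 0)))) \<le> exp ((exp (- c) - 1) * y)"
proof -
  define f q where "f = real_of_int \<lfloor>y\<rfloor>" and "q = y - f"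
  have q: "0 \<le> q" "q \<le> 1" unfolding f_def q_def by linarith+
  have f: "0 \<le> f" using assms unfolding f_def by simp
  have "exp (- c * f) \<le> exp ((exp (- c) - 1) * f)"
    using mult_right_mono[OF _ f, of "- c" "exp (- c) - 1"] exp_ge_add_one_self[of "- c"] by simp
  moreover have "1 + q * (exp (- c) - 1) \<le> exp (q * (exp (- c) - 1))"
    by (rule exp_ge_add_one_self)
  moreover have "0 \<le> 1 + q * (exp (- c) - 1)"
    using q(2) mult_nonneg_nonneg[OF q(1) exp_ge_zero[of "- c"]] by (simp add: algebra_simps)
  ultimately have "exp (- c * f) * (1 + q * (exp (- c) - 1)) \<le> exp ((exp (- c) - 1) * f) * exp (q * (exp (- c) - 1))"
    by (intro mult_mono) auto
  moreover have "measure_pmf.expectation (bernoulli_pmf q) (\<lambda>b. exp (- c * (f + (if b then 1 else 0))))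
      = exp (- c * f) * (1 + q * (exp (- c) - 1))"
    using q by (simp add: exp_add[symmetric] algebra_simps)
  ultimately show ?thesis
    by (simp add: f_def q_def exp_add[symmetric] algebra_simps)
qed

lemma finite_set_pmf_rand_round: "finite (set_pmf (rand_round n y))"
  unfolding rand_round_def by (auto simp: set_Pi_pmf intro!: finite_PiE_dflt)

lemma rand_round_exp_moment_le:
  fixes a y :: "nat \<Rightarrow> real"
  assumes "\<And>j. j < n \<Longrightarrow> 0 \<le> a j" "\<And>j. j < n \<Longrightarrow> 0 \<le> y j" "0 \<le> L"
  shows "measure_pmf.expectation (rand_round n y) (\<lambda>z. exp (- L * (\<Sum>j<n. a j * of_int (z j))))
           \<le> exp (\<Sum>j<n. (exp (- L * a j) - 1) * y j)"
proof -
  define f where "f j = (\<lambda>b. exp (- (L * a j) * (of_int \<lfloor>y j\<rfloor> + (if b then 1 else 0))))" for j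
  have "measure_pmf.expectation (rand_round n y) (\<lambda>z. exp (- L * (\<Sum>j<n. a j * of_int (z j))))
      = measure_pmf.expectation (Pi_pmf {..<n} False (\<lambda>j. bernoulli_pmf (y j - of_int \<lfloor>y j\<rfloor>)))
          (\<lambda>B. \<Prod>j<n. f j (B j))"
    unfolding rand_round_def f_def
    by (simp add: exp_sum[symmetric] sum_distrib_left algebra_simps if_distrib[of real_of_int] cong: if_cong)
  also have "\<dots> = (\<Prod>j<n. measure_pmf.expectation (bernoulli_pmf (y j - of_int \<lfloor>y j\<rfloor>)) (f j))"
    by (rule expectation_prod_Pi_pmf) (auto simp: f_def intro: integrable_measure_pmf_finite)
  also have "\<dots> \<le> (\<Prod>j<n. exp ((exp (- L * a j) - 1) * y j))"
  proof (intro prod_mono conjI)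
    fix j assume "j \<in> {..<n}"
    then show "measure_pmf.expectation (bernoulli_pmf (y j - of_int \<lfloor>y j\<rfloor>)) (f j) \<le> exp ((exp (- L * a j) - 1) * y j)"
      using bernoulli_rounding_exp_moment_le[of "L * a j" "y j"] assms by (simp add: f_def)
  qed (auto simp: f_def intro!: integral_nonneg_AE)
  finally show ?thesis by (simp add: exp_sum)
qed

lemma rand_round_lower_tail_le_exp:
  fixes a y :: "nat \<Rightarrow> real"
  assumes "\<And>j. j < n \<Longrightarrow> 0 \<le> a j" "\<And>j. j < n \<Longrightarrow> 0 \<le> y j" "0 \<le> L"
  shows "measure_pmf.prob (rand_round n y) {z. (\<Sum>j<n. a j * of_int (z j)) < 1}
           \<le> exp (L + (\<Sum>j<n. (exp (- L * a j) - 1) * y j))"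
proof -
  have "measure_pmf.prob (rand_round n y) {z. (\<Sum>j<n. a j * of_int (z j)) < 1}
      \<le> exp L * measure_pmf.expectation (rand_round n y) (\<lambda>z. exp (- L * (\<Sum>j<n. a j * of_int (z j))))"
    using assms(3) finite_set_pmf_rand_round
    by (intro prob_less_one_le_exp_moment integrable_measure_pmf_finite)
  also have "\<dots> \<le> exp L * exp (\<Sum>j<n. (exp (- L * a j) - 1) * y j)"
    using rand_round_exp_moment_le[OF assms] by simp
  finally show ?thesis by (simp add: exp_add)
qed

lemma mult_ln_inverse_mono:
  fixes t D :: real
  assumes "0 < t" "t \<le> D" "1 \<le> ln (1 / D)"
  shows "t * ln (1 / t) \<le> D * ln (1 / D)"
proof -
  have "ln (1 / t) = ln (1 / D) + ln (D / t)"
    using assms by (simp add: ln_div)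
  also have "\<dots> \<le> ln (1 / D) + (D / t - 1)"
    using assms by (simp add: ln_le_minus_one)
  finally have "t * ln (1 / t) \<le> t * ln (1 / D) + (D - t)"
    using assms(1) mult_left_mono by (fastforce simp: field_simps)
  also have "\<dots> \<le> t * ln (1 / D) + (D - t) * ln (1 / D)"
    using assms mult_left_mono[OF assms(3), of "D - t"] by simp
  finally show ?thesis by (simp add: algebra_simps)
qed

lemma mult_ln_inverse_le_of_sqrt_bound:
  fixes \<theta> D \<delta> :: real
  assumes "0 < \<theta>" "\<theta> \<le> D" "D < 1 / 3" "2 * sqrt (D * ln (1 / D)) \<le> \<delta>"
  shows "\<theta> * ln (1 / \<theta>) \<le> \<delta>\<^sup>2 / 4"
proof -
  have D: "0 < D" using assms by linarith
  \<comment> \<open>\<open>D < 1/3 < 1/e\<close>, the regime in which \<open>t \<mapsto> t ln (1/t)\<close> is increasing.\<close>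
  have "D * exp 1 < 1"
    using assms(3) mult_left_mono[OF exp_le less_imp_le[OF D]] by linarith
  then have "exp 1 < 1 / D"
    using D by (simp add: field_simps)
  then have ln_D: "1 \<le> ln (1 / D)"
    using D ln_less_cancel_iff[of "exp 1" "1 / D"] by simp
  have "0 \<le> D * ln (1 / D)"
    using D ln_D by (intro mult_nonneg_nonneg) linarith+
  have "\<theta> * ln (1 / \<theta>) \<le> D * ln (1 / D)"
    using assms(1,2) ln_D by (rule mult_ln_inverse_mono)
  also have "\<dots> \<le> \<delta>\<^sup>2 / 4"
    using power_mono[OF assms(4), of 2] \<open>0 \<le> D * ln (1 / D)\<close> by (simp add: power_mult_distrib)
  finally show ?thesis .
qed

lemma chernoff_exponent_le:
  fixes \<delta> :: real
  assumes "0 \<le> \<delta>"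
  shows "\<delta> / 2 + (exp (- \<delta> / 2) - 1) * (1 + \<delta> + \<delta>\<^sup>2 / 2) \<le> - (\<delta>\<^sup>2 / 4)"
proof -
  define w where "w = 1 + \<delta> / 2 + (\<delta> / 2)\<^sup>2 / 2"
  have w: "0 < w" using assms unfolding w_def by (simp add: add_pos_nonneg)
  have "w \<le> exp (\<delta> / 2)"
    unfolding w_def using assms by (intro exp_lower_Taylor_quadratic) simp
  then have "exp (- \<delta> / 2) \<le> 1 / w"
    using w by (simp add: exp_minus field_simps)
  then have "\<delta> / 2 + (exp (- \<delta> / 2) - 1) * (1 + \<delta> + \<delta>\<^sup>2 / 2) \<le> \<delta> / 2 + (1 / w - 1) * (1 + \<delta> + \<delta>\<^sup>2 / 2)"
    using assms by (intro add_left_mono mult_right_mono) auto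
  also have "\<dots> = - (\<delta>\<^sup>2 / 4) - (\<delta>\<^sup>2 / 8 + 3 * \<delta> ^ 3 / 16 + \<delta> ^ 4 / 32) / w"
    using w unfolding w_def by (simp add: field_simps power2_eq_square power3_eq_cube power4_eq_xxxx)
  also have "\<dots> \<le> - (\<delta>\<^sup>2 / 4)"
    using assms w by simp
  finally show ?thesis .
qed

lemma sum_exp_neg_le_sum_small:
  fixes a y :: "nat \<Rightarrow> real"
  assumes "\<And>j. j < n \<Longrightarrow> 0 \<le> a j" "\<And>j. j < n \<Longrightarrow> 0 \<le> y j" "0 < \<theta>" "0 \<le> s"
  shows "(\<Sum>j<n. (exp (- (s / \<theta>) * a j) - 1) * y j)
           \<le> (exp (- s) - 1) / \<theta> * (\<Sum>j | j < n \<and> a j \<le> \<theta>. a j * y j)"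
proof -
  have "(exp (- (s / \<theta>) * a j) - 1) * y j \<le> (if a j \<le> \<theta> then (exp (- s) - 1) / \<theta> * (a j * y j) else 0)"
    if j: "j < n" for j
  proof (cases "a j \<le> \<theta>")
    case True
    have "exp (- s * (a j / \<theta>)) \<le> 1 - a j / \<theta> + a j / \<theta> * exp (- s)"
      using True assms(1)[OF j] assms(3) by (intro exp_neg_mult_le_convex_comb) auto
    then have "exp (- (s / \<theta>) * a j) - 1 \<le> (exp (- s) - 1) / \<theta> * a j"
      by (simp add: algebra_simps diff_divide_distrib)
    from mult_right_mono[OF this assms(2)[OF j]] show ?thesis
      using True by (simp add: mult.assoc)
  next
    case False
    have "exp (- (s / \<theta>) * a j) \<le> 1"
      using assms(1)[OF j] assms(3,4) by simp
    then show ?thesis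
      using False assms(2)[OF j] by (simp add: mult_nonpos_nonneg)
  qed
  then have "(\<Sum>j<n. (exp (- (s / \<theta>) * a j) - 1) * y j)
      \<le> (\<Sum>j<n. if a j \<le> \<theta> then (exp (- s) - 1) / \<theta> * (a j * y j) else 0)"
    by (intro sum_mono) auto
  also have "\<dots> = (exp (- s) - 1) / \<theta> * (\<Sum>j | j < n \<and> a j \<le> \<theta>. a j * y j)"
    by (simp add: sum.inter_filter[symmetric] sum_distrib_left conj_commute)
  finally show ?thesis .
qed

lemma rand_round_lower_tail_le:
  fixes a x :: "nat \<Rightarrow> real" and \<delta> \<theta> :: real
  assumes a: "\<And>j. j < n \<Longrightarrow> 0 \<le> a j" and x: "\<And>j. j < n \<Longrightarrow> 0 \<le> x j"
    and \<delta>: "0 < \<delta>" "\<delta> < 1" and \<theta>: "0 < \<theta>" "\<theta> * ln (1 / \<theta>) \<le> \<delta>\<^sup>2 / 4"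
    and small_mass: "1 - \<delta> \<le> (\<Sum>j | j < n \<and> a j \<le> \<theta>. a j * x j)"
  shows "measure_pmf.prob (rand_round n (\<lambda>j. (1 + \<delta> + \<delta>\<^sup>2 / 2) / (1 - \<delta>) * x j))
           {z. (\<Sum>j<n. a j * of_int (z j)) < 1} \<le> \<theta>"
proof -
  define \<alpha> where "\<alpha> = (1 + \<delta> + \<delta>\<^sup>2 / 2) / (1 - \<delta>)"
  define s where "s = \<delta> / 2"
  have \<alpha>: "0 < \<alpha>" "\<alpha> * (1 - \<delta>) = 1 + \<delta> + \<delta>\<^sup>2 / 2"
    using \<delta> unfolding \<alpha>_def by (simp_all add: add_pos_nonneg)
  have y: "0 \<le> \<alpha> * x j" if "j < n" for j
    using \<alpha>(1) x[OF that] by simp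
  have coeff: "(exp (- s) - 1) / \<theta> \<le> 0"
    using \<delta> \<theta> unfolding s_def by (simp add: divide_nonpos_pos)
  have "measure_pmf.prob (rand_round n (\<lambda>j. \<alpha> * x j)) {z. (\<Sum>j<n. a j * of_int (z j)) < 1}
      \<le> exp (s / \<theta> + (\<Sum>j<n. (exp (- (s / \<theta>) * a j) - 1) * (\<alpha> * x j)))"
    using \<delta> \<theta> a y unfolding s_def by (intro rand_round_lower_tail_le_exp) auto
  also have "\<dots> \<le> exp (s / \<theta> + (exp (- s) - 1) / \<theta> * (\<Sum>j | j < n \<and> a j \<le> \<theta>. a j * (\<alpha> * x j)))"
    using sum_exp_neg_le_sum_small[OF a y \<theta>(1), where s = s] \<delta> unfolding s_def by simp
  also have "(\<Sum>j | j < n \<and> a j \<le> \<theta>. a j * (\<alpha> * x j)) = \<alpha> * (\<Sum>j | j < n \<and> a j \<le> \<theta>. a j * x j)"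
    by (simp add: sum_distrib_left algebra_simps)
  also have "exp (s / \<theta> + (exp (- s) - 1) / \<theta> * \<dots>) \<le> exp (s / \<theta> + (exp (- s) - 1) / \<theta> * (\<alpha> * (1 - \<delta>)))"
    using mult_left_mono_neg[OF mult_left_mono[OF small_mass less_imp_le[OF \<alpha>(1)]] coeff] by simp
  also have "\<dots> = exp ((\<delta> / 2 + (exp (- \<delta> / 2) - 1) * (1 + \<delta> + \<delta>\<^sup>2 / 2)) / \<theta>)"
    unfolding \<alpha>(2) s_def by (simp add: add_divide_distrib)
  also have "\<dots> \<le> exp (- (\<delta>\<^sup>2 / 4) / \<theta>)"
    using divide_right_mono[OF chernoff_exponent_le, of \<delta> \<theta>] \<delta> \<theta> by simp
  also have "\<dots> \<le> exp (- ln (1 / \<theta>))"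
    using \<theta> by (simp add: field_simps)
  also have "\<dots> = \<theta>"
    using \<theta> by (simp add: ln_div exp_minus)
  finally show ?thesis unfolding \<alpha>_def .
qed

theorem mainTheorem16:
  shows "\<exists>c0::real. 0 < c0 \<and> c0 < 1 \<and>
    (\<forall>(m::nat) (n::nat) (A::nat \<Rightarrow> nat \<Rightarrow> real) (x::nat \<Rightarrow> real) (\<delta>::real) (i::nat) (\<theta>::real).
       0 < n \<and>
       (\<forall>i<m. \<forall>j<n. 0 \<le> A i j \<and> A i j \<le> 1) \<and>
       0 < Delta1 m n A \<and> Delta1 m n A < c0 \<and>
       (\<forall>j<n. 0 \<le> x j) \<and>
       0 < \<delta> \<and> \<delta> < 1 \<and>
       \<delta> \<ge> 2 * sqrt (Delta1 m n A * ln (1 / Delta1 m n A)) \<and>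
       i < m \<and> 0 < \<theta> \<and> \<theta> \<le> Delta1 m n A \<and>
       (\<Sum>j\<in>{j. j < n \<and> A i j \<le> \<theta>}. A i j * x j) \<ge> 1 - \<delta>
     \<longrightarrow>
       (let \<alpha> = (1 + \<delta> + \<delta>\<^sup>2 / 2) / (1 - \<delta>) in
        measure_pmf.prob (rand_round n (\<lambda>j. \<alpha> * x j))
          {z. (\<Sum>j<n. A i j * real_of_int (z j)) < 1} \<le> \<theta>))"
proof (intro exI[of _ "1/3"] conjI allI impI, simp_all only: Let_def)
  fix m n :: nat and A :: "nat \<Rightarrow> nat \<Rightarrow> real" and x :: "nat \<Rightarrow> real" and \<delta> \<theta> :: real and i :: nat
  assume H: "0 < n \<and> (\<forall>i<m. \<forall>j<n. 0 \<le> A i j \<and> A i j \<le> 1) \<and>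
       0 < Delta1 m n A \<and> Delta1 m n A < 1/3 \<and> (\<forall>j<n. 0 \<le> x j) \<and> 0 < \<delta> \<and> \<delta> < 1 \<and>
       \<delta> \<ge> 2 * sqrt (Delta1 m n A * ln (1 / Delta1 m n A)) \<and>
       i < m \<and> 0 < \<theta> \<and> \<theta> \<le> Delta1 m n A \<and>
       (\<Sum>j\<in>{j. j < n \<and> A i j \<le> \<theta>}. A i j * x j) \<ge> 1 - \<delta>"
  then have "\<theta> * ln (1 / \<theta>) \<le> \<delta>\<^sup>2 / 4"
    by (intro mult_ln_inverse_le_of_sqrt_bound[where D = "Delta1 m n A"]) auto
  then show "measure_pmf.prob (rand_round n (\<lambda>j. (1 + \<delta> + \<delta>\<^sup>2 / 2) / (1 - \<delta>) * x j))
          {z. (\<Sum>j<n. A i j * real_of_int (z j)) < 1} \<le> \<theta>"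
    using H by (intro rand_round_lower_tail_le) auto
qed

end
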